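(* Index the coordinates of $\mathbb{R}^9$ by $1,\dots,9$. Let $\mathcal{S}$ be the following family of $18$ four-element subsets of $\{1,\dots,9\}$: $\{1,2,4,5\}$, $\{1,2,6,9\}$, $\{1,2,7,8\}$, $\{1,3,4,6\}$, $\{1,3,5,8\}$, $\{1,3,7,9\}$, $\{1,4,8,9\}$, $\{1,5,6,7\}$, $\{2,3,4,7\}$, $\{2,3,5,6\}$, $\{2,3,8,9\}$, $\{2,4,6,8\}$, $\{2,5,7,9\}$, $\{3,4,5,9\}$, $\{3,6,7,8\}$, $\{4,5,7,8\}$, $\{4,6,7,9\}$, $\{5,6,8,9\}$. Let $C\subset\mathbb{R}^9$ consist of the $18$ vectors $\pm 2e_j$ ($j=1,\dots,9$, $e_j$ the standard basis vectors) together with the $288$ vectors having entries $\pm1$ (arbitrary signs) on the coordinates of some $S\in\mathcal{S}$ and $0$ elsewhere; so $|C|=306$. Let $\sigma:\mathbb{R}^9\to\mathbb{R}^9$ be the coordinate permutation swapping coordinates $2$ and $3$ and swapping coordinates $4$ and $7$ (fixing the others). Let $C'=\bigl(C\setminus\{x\in C: x_1=1\}\bigr)\cup\{\sigma(x): x\in C,\ x_1=1\}$. Then $C$ and $C'$ are both kissing configurations of $306$ points in $\mathbb{R}^9$, and they are not isometric. In particular, there are at least two non-isometric kissing configurations of $306$ points in nine dimensions.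
   Context: A kissing configuration in $\mathbb{R}^n$ is a finite set of vectors all of the same norm $r>0$ such that any two distinct vectors have inner product at most $r^2/2$ (angle at least $\pi/3$); here all vectors have squared norm $4$, so distinct vectors must have inner product at most $2$. Two configurations are isometric if some orthogonal transformation of $\mathbb{R}^n$ maps one onto the other. *)

theory Defs
  imports "HOL-Analysis.Analysis" "HOL-Library.Numeral_Type"
begin

text \<open>Vectors in R^9 are \<open>real^9\<close>. The paper's coordinate i (1..9) is the
  component \<open>x $ of_nat i\<close>; \<open>of_nat\<close> maps 1..9 bijectively onto the index type 9.\<close>

abbreviation coord :: "real^9 \<Rightarrow> nat \<Rightarrow> real" where
  "coord x i \<equiv> x $ (of_nat i :: 9)"

definition kissing_configuration :: "'a::real_inner set \<Rightarrow> bool" where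
  "kissing_configuration X \<longleftrightarrow> finite X \<and>
     (\<exists>r>0. (\<forall>x\<in>X. norm x = r) \<and>
            (\<forall>x\<in>X. \<forall>y\<in>X. x \<noteq> y \<longrightarrow> inner x y \<le> r\<^sup>2 / 2))"

definition isometric_configs :: "'a::euclidean_space set \<Rightarrow> 'a set \<Rightarrow> bool" where
  "isometric_configs X Y \<longleftrightarrow> (\<exists>f. orthogonal_transformation f \<and> f ` X = Y)"

definition fam :: "nat set set" where
  "fam = {{1,2,4,5}, {1,2,6,9}, {1,2,7,8}, {1,3,4,6}, {1,3,5,8}, {1,3,7,9},
          {1,4,8,9}, {1,5,6,7}, {2,3,4,7}, {2,3,5,6}, {2,3,8,9}, {2,4,6,8},
          {2,5,7,9}, {3,4,5,9}, {3,6,7,8}, {4,5,7,8}, {4,6,7,9}, {5,6,8,9}}"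

definition confC :: "(real^9) set" where
  "confC = {x. (\<exists>j\<in>{1..9}. \<exists>s\<in>{-2, 2}. \<forall>i\<in>{1..9}. coord x i = (if i = j then s else 0))
             \<or> (\<exists>S\<in>fam. \<forall>i\<in>{1..9}. if i \<in> S then \<bar>coord x i\<bar> = 1 else coord x i = 0)}"

definition swap9 :: "9 \<Rightarrow> 9" where
  "swap9 k = (if k = of_nat 2 then of_nat 3 else if k = of_nat 3 then of_nat 2
              else if k = of_nat 4 then of_nat 7 else if k = of_nat 7 then of_nat 4 else k)"

definition sigma9 :: "real^9 \<Rightarrow> real^9" where
  "sigma9 x = (\<chi> k. x $ swap9 k)"

definition confC' :: "(real^9) set" where
  "confC' = (confC - {x \<in> confC. coord x 1 = 1}) \<union> sigma9 ` {x \<in> confC. coord x 1 = 1}"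

end

theory Submission
  imports Defs
begin

text \<open>All vectors of \<open>C\<close> have squared norm 4, and distinct ones have inner product at most 2:
  a vector \<open>\<plusminus>2e\<^sub>j\<close> has inner product 0 or \<open>-4\<close> with the other vectors \<open>\<plusminus>2e\<^sub>k\<close> and
  \<open>\<plusminus>2\<close> or 0 with the sign vectors; two blocks of the family share at most two coordinates; and two
  different sign vectors on the same block have product \<open>-1\<close> in some coordinate, leaving at most 3
  for the other three.

  Since \<open>\<sigma>\<close> preserves inner products, for \<open>C'\<close> only the pairs \<open>x \<in> C - D\<close>, \<open>\<sigma>(b)\<close> with
  \<open>b \<in> D\<close> are new, where \<open>D\<close> is the set of vectors with first entry 1. Either \<open>x\<close> has entry
  \<open>-1\<close> at coordinate 1, opposite to \<open>\<sigma>(b)\<close>, or the block of \<open>x\<close> avoids 1 and meets the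
  swapped block of \<open>b\<close> in at most two coordinates.

  \<open>C\<close> is closed under negation, hence so is each of its images under a linear map. \<open>C'\<close> is not:
  \<open>\<sigma>(e\<^sub>1 + e\<^sub>2 + e\<^sub>4 + e\<^sub>5) \<in> C'\<close>, but its negative has first entry \<open>-1\<close>, so it is not an
  image under \<open>\<sigma>\<close>, and its support \<open>{1, 3, 5, 7}\<close> is not contained in a block.\<close>

section \<open>Coordinates and the swap \<open>\<sigma>\<close>\<close>

lemma atLeastAtMost_1_9: "{1..9::nat} = {1,2,3,4,5,6,7,8,9}"
  by auto

lemma inj_on_of_nat_9: "inj_on (of_nat :: nat \<Rightarrow> 9) {1..9}"
  unfolding atLeastAtMost_1_9 inj_on_def by simp

lemma of_nat_9_image: "(of_nat :: nat \<Rightarrow> 9) ` {1..9} = UNIV"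
proof -
  have "card ((of_nat :: nat \<Rightarrow> 9) ` {1..9}) = CARD(9)"
    using card_image[OF inj_on_of_nat_9] by simp
  then show ?thesis
    by (intro card_eq_UNIV_imp_eq_UNIV) simp_all
qed

lemma inner_coord: "inner x y = (\<Sum>i\<in>{1..9}. coord x i * coord y i)" for x y :: "real^9"
proof -
  have "inner x y = (\<Sum>k\<in>UNIV. x $ k * y $ k)"
    by (simp add: inner_vec_def)
  also have "\<dots> = (\<Sum>k\<in>(of_nat :: nat \<Rightarrow> 9) ` {1..9}. x $ k * y $ k)"
    by (simp only: of_nat_9_image)
  also have "\<dots> = (\<Sum>i\<in>{1..9}. coord x i * coord y i)"
    by (simp only: sum.reindex[OF inj_on_of_nat_9] comp_def)
  finally show ?thesis .
qed

lemma vec9_eq_iff: "x = y \<longleftrightarrow> (\<forall>i\<in>{1..9}. coord x i = coord y i)" for x y :: "real^9"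
  by (metis (mono_tags, lifting) imageE of_nat_9_image UNIV_I vec_eq_iff)

definition vec9 :: "(nat \<Rightarrow> real) \<Rightarrow> real^9" where
  "vec9 f = (\<chi> k. f (inv_into {1..9} of_nat k))"

lemma coord_vec9: "i \<in> {1..9} \<Longrightarrow> coord (vec9 f) i = f i"
  unfolding vec9_def by (simp only: vec_lambda_beta inv_into_f_f[OF inj_on_of_nat_9])

definition swap_index :: "nat \<Rightarrow> nat" where
  "swap_index i = (if i = 2 then 3 else if i = 3 then 2 else if i = 4 then 7 else if i = 7 then 4 else i)"

lemma swap_index_swap_index [simp]: "swap_index (swap_index i) = i"
  by (simp add: swap_index_def)

lemma swap_index_in_range: "i \<in> {1..9} \<Longrightarrow> swap_index i \<in> {1..9}"
  by (auto simp: swap_index_def)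

lemma bij_betw_swap_index: "bij_betw swap_index {1..9} {1..9}"
  by (rule bij_betw_byWitness[where f' = swap_index]) (auto simp: swap_index_def)

lemma swap_index_mem_image_iff: "i \<in> swap_index ` T \<longleftrightarrow> swap_index i \<in> T"
  by (metis image_iff swap_index_swap_index)

lemma coord_sigma9: "i \<in> {1..9} \<Longrightarrow> coord (sigma9 x) i = coord x (swap_index i)"
  unfolding atLeastAtMost_1_9 by (auto simp: sigma9_def swap9_def swap_index_def)

lemma sigma9_nth_1 [simp]: "sigma9 x $ 1 = x $ 1"
  using coord_sigma9[of 1 x] by (simp add: swap_index_def)

lemma inner_sigma9: "inner (sigma9 x) (sigma9 y) = inner x y"
proof -
  have "inner (sigma9 x) (sigma9 y) = (\<Sum>i\<in>{1..9}. coord x (swap_index i) * coord y (swap_index i))"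
    by (simp add: inner_coord coord_sigma9)
  also have "\<dots> = inner x y"
    unfolding inner_coord by (rule sum.reindex_bij_betw[OF bij_betw_swap_index])
  finally show ?thesis .
qed

lemma sigma9_sigma9 [simp]: "sigma9 (sigma9 x) = x"
  unfolding vec9_eq_iff by (metis coord_sigma9 swap_index_in_range swap_index_swap_index)

lemma inj_sigma9: "inj sigma9"
  by (metis injI sigma9_sigma9)

section \<open>Axis vectors and sign vectors\<close>

definition axis_vectors :: "(real^9) set" where
  "axis_vectors = {x. \<exists>j\<in>{1..9}. \<exists>s\<in>{-2, 2}. \<forall>i\<in>{1..9}. coord x i = (if i = j then s else 0)}"

definition sign_vectors :: "nat set \<Rightarrow> (real^9) set" where
  "sign_vectors S = {x. \<forall>i\<in>{1..9}. if i \<in> S then \<bar>coord x i\<bar> = 1 else coord x i = 0}"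

lemma confC_eq: "confC = axis_vectors \<union> \<Union>(sign_vectors ` fam)"
  unfolding confC_def axis_vectors_def sign_vectors_def by blast

lemma axis_vectorE:
  assumes "x \<in> axis_vectors"
  obtains j s where "j \<in> {1..9}" "s \<in> {-2, 2}" "\<forall>i\<in>{1..9}. coord x i = (if i = j then s else 0)"
    "\<And>y. inner x y = s * coord y j"
proof -
  obtain j s where j: "j \<in> {1..9}" "s \<in> {-2, 2}"
    and x: "\<forall>i\<in>{1..9}. coord x i = (if i = j then s else 0)"
    using assms unfolding axis_vectors_def by blast
  have "inner x y = s * coord y j" for y
  proof -
    have "inner x y = (\<Sum>i\<in>{1..9}. if i = j then s * coord y i else 0)"
      unfolding inner_coord by (rule sum.cong) (use x in auto)
    also have "\<dots> = s * coord y j"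
      using j by simp
    finally show ?thesis .
  qed
  with j x that show ?thesis by blast
qed

lemma inner_axis_vector_self: "x \<in> axis_vectors \<Longrightarrow> inner x x = 4"
  by (erule axis_vectorE) auto

lemma inner_axis_vector_le:
  assumes "x \<in> axis_vectors" and "\<forall>i\<in>{1..9}. \<bar>coord y i\<bar> \<le> 1"
  shows "inner x y \<le> 2"
  using assms(1)
proof (rule axis_vectorE)
  fix j s assume j: "j \<in> {1..9}" "s \<in> {-2, 2}" and inner_x: "\<And>y. inner x y = s * coord y j"
  have "\<bar>coord y j\<bar> \<le> 1"
    using assms(2) j(1) by blast
  with j(2) inner_x[of y] show ?thesis
    by (auto simp: abs_le_iff)
qed

lemma inner_axis_vectors_le:
  assumes x: "x \<in> axis_vectors" and y: "y \<in> axis_vectors" and "x \<noteq> y"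
  shows "inner x y \<le> 2"
proof -
  obtain j s where j: "j \<in> {1..9}" "s \<in> {-2, 2}"
    and cx: "\<forall>i\<in>{1..9}. coord x i = (if i = j then s else 0)"
    and inner_x: "\<And>y. inner x y = s * coord y j"
    using axis_vectorE[OF x] by metis
  obtain k t where k: "k \<in> {1..9}" "t \<in> {-2, 2}"
    and cy: "\<forall>i\<in>{1..9}. coord y i = (if i = k then t else 0)"
    using axis_vectorE[OF y] by metis
  have "j \<noteq> k \<or> s \<noteq> t"
    using \<open>x \<noteq> y\<close> cx cy by (auto simp: vec9_eq_iff)
  then show ?thesis
    using inner_x[of y] cy j k by auto
qed

lemma sign_vector_coord:
  "x \<in> sign_vectors S \<Longrightarrow> i \<in> {1..9} \<Longrightarrow> (if i \<in> S then \<bar>coord x i\<bar> = 1 else coord x i = 0)"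
  unfolding sign_vectors_def by blast

lemma abs_coord_sign_vector_le: "x \<in> sign_vectors S \<Longrightarrow> \<forall>i\<in>{1..9}. \<bar>coord x i\<bar> \<le> 1"
  by (metis order.refl sign_vector_coord abs_zero zero_le_one)

lemma inner_sign_vector:
  assumes "x \<in> sign_vectors S" "S \<subseteq> {1..9}"
  shows "inner x y = (\<Sum>i\<in>S. coord x i * coord y i)"
  unfolding inner_coord
  by (rule sum.mono_neutral_right) (use assms in \<open>auto simp: sign_vectors_def\<close>)

lemma inner_sign_vector_self:
  assumes x: "x \<in> sign_vectors S" and S: "S \<subseteq> {1..9}"
  shows "inner x x = card S"
proof -
  have "inner x x = (\<Sum>i\<in>S. 1)"
  proof (subst inner_sign_vector[OF x S], rule sum.cong)
    fix i assume "i \<in> S"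
    then have "\<bar>coord x i\<bar> = 1"
      using sign_vector_coord[OF x] S by force
    then show "coord x i * coord x i = 1"
      by (metis abs_mult_self_eq mult_1)
  qed simp
  then show ?thesis by simp
qed

lemma inner_sign_vectors_le_card_Int:
  assumes x: "x \<in> sign_vectors S" and y: "y \<in> sign_vectors T" and S: "S \<subseteq> {1..9}"
  shows "inner x y \<le> card (S \<inter> T)"
proof -
  have "coord y i = 0" if "i \<in> S - S \<inter> T" for i
  proof -
    have "i \<in> {1..9}"
      using that S by blast
    then show ?thesis
      using sign_vector_coord[OF y \<open>i \<in> {1..9}\<close>] that by simp
  qed
  then have "inner x y = (\<Sum>i\<in>S \<inter> T. coord x i * coord y i)"
    unfolding inner_sign_vector[OF x S]
    by (intro sum.mono_neutral_right) (use S finite_subset in auto)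
  also have "\<dots> \<le> (\<Sum>i\<in>S \<inter> T. 1)"
  proof (rule sum_mono)
    fix i assume "i \<in> S \<inter> T"
    then have "\<bar>coord x i\<bar> = 1" "\<bar>coord y i\<bar> = 1"
      using sign_vector_coord[OF x] sign_vector_coord[OF y] S by force+
    then show "coord x i * coord y i \<le> 1"
      by (metis abs_mult abs_le_iff order_refl mult_1)
  qed
  finally show ?thesis by simp
qed

lemma inner_sign_vector_opposite_le:
  assumes x: "x \<in> sign_vectors S" and S: "S \<subseteq> {1..9}" and i0: "i0 \<in> S"
    and opposite: "coord x i0 * coord y i0 = -1" and y: "\<forall>i\<in>{1..9}. \<bar>coord y i\<bar> \<le> 1"
  shows "inner x y \<le> real (card S) - 2"
proof -
  have fin: "finite S"
    using S finite_subset by blast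
  have "(\<Sum>i\<in>S - {i0}. coord x i * coord y i) \<le> (\<Sum>i\<in>S - {i0}. 1)"
  proof (rule sum_mono)
    fix i assume "i \<in> S - {i0}"
    then have "\<bar>coord x i\<bar> = 1" "\<bar>coord y i\<bar> \<le> 1"
      using sign_vector_coord[OF x] y S by force+
    then have "\<bar>coord x i * coord y i\<bar> \<le> 1"
      by (simp add: abs_mult)
    then show "coord x i * coord y i \<le> 1"
      by linarith
  qed
  moreover have "inner x y = coord x i0 * coord y i0 + (\<Sum>i\<in>S - {i0}. coord x i * coord y i)"
    unfolding inner_sign_vector[OF x S] using fin i0 by (simp add: sum.remove)
  moreover have "(\<Sum>i\<in>S - {i0}. (1::real)) = card (S - {i0})"
    by simp
  ultimately have "inner x y \<le> -1 + real (card (S - {i0}))"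
    using opposite by linarith
  moreover have "card S \<ge> 1"
    using fin i0 by (auto simp: Suc_le_eq card_gt_0_iff)
  then have "real (card (S - {i0})) = real (card S) - 1"
    using fin i0 by (simp add: card_Diff_singleton)
  ultimately show ?thesis
    by linarith
qed

lemma inner_sign_vectors_same_le:
  assumes x: "x \<in> sign_vectors S" and y: "y \<in> sign_vectors S" and S: "S \<subseteq> {1..9}" and "x \<noteq> y"
  shows "inner x y \<le> real (card S) - 2"
proof -
  obtain i where i: "i \<in> {1..9}" "coord x i \<noteq> coord y i"
    using \<open>x \<noteq> y\<close> vec9_eq_iff by blast
  have "i \<in> S"
  proof (rule ccontr)
    assume "i \<notin> S"
    then have "coord x i = 0" "coord y i = 0"
      using sign_vector_coord[OF x i(1)] sign_vector_coord[OF y i(1)] by simp_all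
    with i(2) show False by simp
  qed
  then have "\<bar>coord x i\<bar> = 1" "\<bar>coord y i\<bar> = 1"
    using sign_vector_coord[OF x] sign_vector_coord[OF y] i by force+
  with i(2) have "coord x i * coord y i = -1"
    by (auto simp: abs_if split: if_splits)
  then show ?thesis
    using inner_sign_vector_opposite_le[OF x S \<open>i \<in> S\<close>] abs_coord_sign_vector_le[OF y] by blast
qed

section \<open>The configuration \<open>C\<close>\<close>

lemma fam_subset: "\<forall>S\<in>fam. S \<subseteq> {1..9}"
  by (simp add: fam_def)

lemma fam_card: "\<forall>S\<in>fam. card S = 4"
  by (simp add: fam_def)

lemma fam_pairwise_Int: "\<forall>S\<in>fam. \<forall>T\<in>fam. S \<noteq> T \<longrightarrow> card (S \<inter> T) \<le> 2"
  by (simp add: fam_def)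

lemma fam_swapped_Int:
  "\<forall>S\<in>fam. \<forall>T\<in>fam. 1 \<notin> S \<longrightarrow> 1 \<in> T \<longrightarrow> card (S \<inter> swap_index ` T) \<le> 2"
  by (simp add: fam_def swap_index_def)

lemma fam_not_supset: "\<forall>S\<in>fam. \<not> {1, 3, 5, 7} \<subseteq> S"
  by (simp add: fam_def)

lemma card_fam: "card fam = 18"
  unfolding fam_def by code_simp

lemma kissing_configurationI:
  fixes X :: "'a::real_inner set"
  assumes "finite X" and "\<And>x. x \<in> X \<Longrightarrow> inner x x = 4"
    and "pairwise (\<lambda>x y. inner x y \<le> 2) X"
  shows "kissing_configuration X"
  unfolding kissing_configuration_def
proof (intro conjI exI[of _ 2])
  show "\<forall>x\<in>X. norm x = 2"
    using assms(2) by (simp add: norm_eq_sqrt_inner)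
qed (use assms in \<open>auto simp: pairwise_def\<close>)

lemma inner_confC_self: "x \<in> confC \<Longrightarrow> inner x x = 4"
  unfolding confC_eq
  using inner_axis_vector_self inner_sign_vector_self fam_subset fam_card by fastforce

lemma pairwise_inner_confC: "pairwise (\<lambda>x y. inner x y \<le> 2) confC"
proof (rule pairwiseI)
  fix x y assume x: "x \<in> confC" and y: "y \<in> confC" and "x \<noteq> y"
  consider "x \<in> axis_vectors" "y \<in> axis_vectors"
    | "x \<in> axis_vectors" "y \<notin> axis_vectors" | "x \<notin> axis_vectors" "y \<in> axis_vectors"
    | S T where "S \<in> fam" "x \<in> sign_vectors S" "T \<in> fam" "y \<in> sign_vectors T"
    using x y unfolding confC_eq by blast
  then show "inner x y \<le> 2"
  proof cases
    case 1
    then show ?thesis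
      using inner_axis_vectors_le \<open>x \<noteq> y\<close> by blast
  next
    case 2
    then show ?thesis
      using y inner_axis_vector_le abs_coord_sign_vector_le unfolding confC_eq by blast
  next
    case 3
    then have "inner y x \<le> 2"
      using x inner_axis_vector_le abs_coord_sign_vector_le unfolding confC_eq by blast
    then show ?thesis
      by (simp add: inner_commute)
  next
    case (4 S T)
    then have S: "S \<subseteq> {1..9}" "card S = 4"
      using fam_subset fam_card by auto
    show ?thesis
    proof (cases "S = T")
      case True
      then show ?thesis
        using inner_sign_vectors_same_le[OF 4(2) _ S(1) \<open>x \<noteq> y\<close>] 4(4) S(2) by simp
    next
      case False
      then have "card (S \<inter> T) \<le> 2"
        using fam_pairwise_Int 4(1,3) by blast
      then show ?thesis
        using inner_sign_vectors_le_card_Int[OF 4(2,4) S(1)] by simp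
    qed
  qed
qed

definition axis_vector :: "nat \<times> real \<Rightarrow> real^9" where
  "axis_vector p = vec9 (\<lambda>i. if i = fst p then snd p else 0)"

definition sign_vector :: "nat set \<Rightarrow> (nat \<Rightarrow> real) \<Rightarrow> real^9" where
  "sign_vector S g = vec9 (\<lambda>i. if i \<in> S then g i else 0)"

lemma axis_vectors_eq_image: "axis_vectors = axis_vector ` ({1..9} \<times> {-2, 2})"
proof
  show "axis_vectors \<subseteq> axis_vector ` ({1..9} \<times> {-2, 2})"
  proof
    fix x assume "x \<in> axis_vectors"
    then obtain j s where "j \<in> {1..9}" "s \<in> {-2, 2}"
      and "\<forall>i\<in>{1..9}. coord x i = (if i = j then s else 0)"
      unfolding axis_vectors_def by blast
    then show "x \<in> axis_vector ` ({1..9} \<times> {-2, 2})"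
      by (intro image_eqI[of _ _ "(j, s)"]) (auto simp: vec9_eq_iff axis_vector_def coord_vec9)
  qed
  show "axis_vector ` ({1..9} \<times> {-2, 2}) \<subseteq> axis_vectors"
  proof
    fix x assume "x \<in> axis_vector ` ({1..9} \<times> {-2, 2})"
    then obtain j s where j: "j \<in> {1..9}" "s \<in> {-2, 2}" and x: "x = axis_vector (j, s)"
      by blast
    then have "\<forall>i\<in>{1..9}. coord x i = (if i = j then s else 0)"
      by (simp add: axis_vector_def coord_vec9)
    then show "x \<in> axis_vectors"
      unfolding axis_vectors_def using j by blast
  qed
qed

lemma inj_on_axis_vector: "inj_on axis_vector ({1..9} \<times> {-2, 2})"
proof (rule inj_onI)
  fix p q assume p: "p \<in> {1..9} \<times> {-2, 2}" and q: "q \<in> {1..9} \<times> {-2, 2}"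
    and "axis_vector p = axis_vector q"
  then have "coord (axis_vector p) (fst p) = coord (axis_vector q) (fst p)"
    by simp
  then have "snd p = (if fst p = fst q then snd q else 0)"
    using p by (simp add: axis_vector_def coord_vec9 mem_Times_iff)
  moreover have "snd p \<noteq> 0"
    using p by auto
  ultimately show "p = q"
    by (metis prod_eq_iff)
qed

lemma card_axis_vectors: "card axis_vectors = 18"
proof -
  have "card axis_vectors = card ({1..9::nat} \<times> {-2, 2::real})"
    unfolding axis_vectors_eq_image by (rule card_image[OF inj_on_axis_vector])
  then show ?thesis
    by (simp add: card_cartesian_product)
qed

lemma sign_vectors_eq_image:
  assumes S: "S \<subseteq> {1..9}"
  shows "sign_vectors S = sign_vector S ` (S \<rightarrow>\<^sub>E {-1, 1})"
proof
  show "sign_vectors S \<subseteq> sign_vector S ` (S \<rightarrow>\<^sub>E {-1, 1})"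
  proof
    fix x assume x: "x \<in> sign_vectors S"
    have "restrict (coord x) S \<in> S \<rightarrow>\<^sub>E {-1, 1}"
    proof
      fix i assume "i \<in> S"
      then have "\<bar>coord x i\<bar> = 1"
        using sign_vector_coord[OF x] S by force
      then show "restrict (coord x) S i \<in> {-1, 1}"
        using \<open>i \<in> S\<close> by (auto simp: abs_if split: if_splits)
    qed auto
    moreover have "x = sign_vector S (restrict (coord x) S)"
      unfolding vec9_eq_iff sign_vector_def using x by (auto simp: sign_vectors_def coord_vec9)
    ultimately show "x \<in> sign_vector S ` (S \<rightarrow>\<^sub>E {-1, 1})"
      by blast
  qed
  show "sign_vector S ` (S \<rightarrow>\<^sub>E {-1, 1}) \<subseteq> sign_vectors S"
  proof
    fix x assume "x \<in> sign_vector S ` (S \<rightarrow>\<^sub>E {-1, 1})"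
    then obtain g where g: "g \<in> S \<rightarrow>\<^sub>E {-1, 1}" and x: "x = sign_vector S g"
      by blast
    have "if i \<in> S then \<bar>coord x i\<bar> = 1 else coord x i = 0" if "i \<in> {1..9}" for i
      using g that unfolding x sign_vector_def by (auto simp: coord_vec9 PiE_iff)
    then show "x \<in> sign_vectors S"
      unfolding sign_vectors_def by blast
  qed
qed

lemma inj_on_sign_vector:
  assumes "S \<subseteq> {1..9}"
  shows "inj_on (sign_vector S) (S \<rightarrow>\<^sub>E {-1, 1})"
proof (rule inj_onI)
  fix f g assume f: "f \<in> S \<rightarrow>\<^sub>E {-1, 1}" and g: "g \<in> S \<rightarrow>\<^sub>E {-1, 1}"
    and fg: "sign_vector S f = sign_vector S g"
  show "f = g"
  proof (rule PiE_ext[OF f g])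
    fix i assume "i \<in> S"
    moreover have "coord (sign_vector S f) i = coord (sign_vector S g) i"
      using fg by simp
    ultimately show "f i = g i"
      using assms by (auto simp: sign_vector_def coord_vec9)
  qed
qed

lemma card_sign_vectors:
  assumes S: "S \<subseteq> {1..9}"
  shows "card (sign_vectors S) = 2 ^ card S"
proof -
  have "finite S"
    using S finite_subset by blast
  then show ?thesis
    unfolding sign_vectors_eq_image[OF S] card_image[OF inj_on_sign_vector[OF S]]
    by (simp add: card_PiE numeral_2_eq_2)
qed

lemma finite_sign_vectors: "S \<subseteq> {1..9} \<Longrightarrow> finite (sign_vectors S)"
  using card_sign_vectors by (metis card_eq_0_iff power_not_zero zero_neq_numeral)

lemma axis_vectors_Int_sign_vectors: "axis_vectors \<inter> sign_vectors S = {}"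
proof (rule ccontr)
  assume "axis_vectors \<inter> sign_vectors S \<noteq> {}"
  then obtain x where x: "x \<in> axis_vectors" "x \<in> sign_vectors S"
    by blast
  then obtain j s where j: "j \<in> {1..9}" "s \<in> {-2, 2}" "coord x j = s"
    by (elim axis_vectorE) auto
  moreover have "\<bar>coord x j\<bar> \<le> 1"
    using abs_coord_sign_vector_le[OF x(2)] j(1) by blast
  ultimately show False
    by auto
qed

lemma sign_vectors_disjoint:
  assumes "S \<subseteq> {1..9}" "T \<subseteq> {1..9}" "S \<noteq> T"
  shows "sign_vectors S \<inter> sign_vectors T = {}"
proof (rule ccontr)
  assume "sign_vectors S \<inter> sign_vectors T \<noteq> {}"
  then obtain x where x: "x \<in> sign_vectors S" "x \<in> sign_vectors T"
    by blast
  from assms obtain i where i: "i \<in> {1..9}" "i \<in> S \<longleftrightarrow> i \<notin> T"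
    by blast
  show False
    using sign_vector_coord[OF x(1) i(1)] sign_vector_coord[OF x(2) i(1)] i(2)
    by (auto split: if_splits)
qed

lemma card_confC: "card confC = 306" and finite_confC: "finite confC"
proof -
  have fin: "\<forall>S\<in>fam. finite (sign_vectors S)"
    using finite_sign_vectors fam_subset by blast
  have disj: "\<forall>S\<in>fam. \<forall>T\<in>fam. S \<noteq> T \<longrightarrow> sign_vectors S \<inter> sign_vectors T = {}"
    using sign_vectors_disjoint fam_subset by blast
  have fin_axis: "finite axis_vectors"
    unfolding axis_vectors_eq_image by simp
  have "card (\<Union>(sign_vectors ` fam)) = (\<Sum>S\<in>fam. card (sign_vectors S))"
    using card_UN_disjoint[OF _ fin disj] by (simp add: fam_def)
  also have "\<dots> = (\<Sum>S\<in>fam. 16)"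
    using card_sign_vectors fam_subset fam_card by simp
  finally have card_sign: "card (\<Union>(sign_vectors ` fam)) = 288"
    using card_fam by simp
  have "card confC = card axis_vectors + card (\<Union>(sign_vectors ` fam))"
    unfolding confC_eq using fin fin_axis axis_vectors_Int_sign_vectors
    by (intro card_Un_disjoint) (auto simp: fam_def)
  then show "card confC = 306"
    using card_axis_vectors card_sign by simp
  show "finite confC"
    unfolding confC_eq using fin fin_axis by (simp add: fam_def)
qed

section \<open>The configuration \<open>C'\<close>\<close>

definition confD :: "(real^9) set" where
  "confD = {x \<in> confC. coord x 1 = 1}"

lemma confC'_eq: "confC' = (confC - confD) \<union> sigma9 ` confD"
  unfolding confC'_def confD_def by simp

lemma confD_subset: "confD \<subseteq> confC"
  unfolding confD_def by blast

lemma confD_in_sign_vectors: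
  assumes "x \<in> confD"
  obtains T where "T \<in> fam" "1 \<in> T" "x \<in> sign_vectors T"
proof -
  have x: "x \<in> confC" "coord x 1 = 1"
    using assms unfolding confD_def by auto
  have "x \<notin> axis_vectors"
  proof
    assume "x \<in> axis_vectors"
    then obtain j s where "s \<in> {-2, 2}" and x_coord: "\<forall>i\<in>{1..9}. coord x i = (if i = j then s else 0)"
      by (elim axis_vectorE)
    then have "coord x 1 \<in> {-2, 0, 2}"
      using bspec[OF x_coord, of 1] by (auto split: if_splits)
    with x(2) show False
      by simp
  qed
  then obtain T where T: "T \<in> fam" "x \<in> sign_vectors T"
    using x(1) unfolding confC_eq by blast
  moreover have "1 \<in> T"
    using sign_vector_coord[OF T(2), of 1] x(2) by (auto split: if_splits)
  ultimately show thesis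
    using that by blast
qed

lemma sigma9_sign_vectors:
  assumes x: "x \<in> sign_vectors T"
  shows "sigma9 x \<in> sign_vectors (swap_index ` T)"
  unfolding sign_vectors_def
proof (intro CollectI ballI)
  fix i :: nat assume i: "i \<in> {1..9}"
  show "if i \<in> swap_index ` T then \<bar>coord (sigma9 x) i\<bar> = 1 else coord (sigma9 x) i = 0"
    using sign_vector_coord[OF x swap_index_in_range[OF i]]
    by (simp add: coord_sigma9[OF i] swap_index_mem_image_iff)
qed

lemma inner_confC_sigma9_confD_le:
  assumes x: "x \<in> confC - confD" and b: "b \<in> confD"
  shows "inner x (sigma9 b) \<le> 2"
proof -
  obtain T where T: "T \<in> fam" "1 \<in> T" "b \<in> sign_vectors T"
    using b by (rule confD_in_sign_vectors)
  let ?y = "sigma9 b"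
  have y: "?y \<in> sign_vectors (swap_index ` T)"
    using sigma9_sign_vectors[OF T(3)] .
  have y_bound: "\<forall>i\<in>{1..9}. \<bar>coord ?y i\<bar> \<le> 1"
    using abs_coord_sign_vector_le[OF y] .
  have y1: "coord ?y 1 = 1"
    using b unfolding confD_def by simp
  have x1: "coord x 1 \<noteq> 1"
    using x unfolding confD_def by simp
  consider "x \<in> axis_vectors" | S where "S \<in> fam" "x \<in> sign_vectors S"
    using x unfolding confC_eq by blast
  then show ?thesis
  proof cases
    case 1
    then show ?thesis
      using inner_axis_vector_le y_bound by blast
  next
    case (2 S)
    have S: "S \<subseteq> {1..9}" "card S = 4"
      using fam_subset fam_card 2(1) by auto
    show ?thesis
    proof (cases "1 \<in> S")
      case True
      then have "\<bar>coord x 1\<bar> = 1"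
        using sign_vector_coord[OF 2(2), of 1] by simp
      with x1 y1 have "coord x 1 * coord ?y 1 = -1"
        by (auto simp: abs_if split: if_splits)
      then show ?thesis
        using inner_sign_vector_opposite_le[OF 2(2) S(1) True _ y_bound] S(2) by simp
    next
      case False
      then have "card (S \<inter> swap_index ` T) \<le> 2"
        using fam_swapped_Int 2(1) T(1,2) by blast
      then show ?thesis
        using inner_sign_vectors_le_card_Int[OF 2(2) y S(1)] by simp
    qed
  qed
qed

lemma pairwise_inner_confC': "pairwise (\<lambda>x y. inner x y \<le> 2) confC'"
proof (rule pairwiseI)
  fix x y assume x: "x \<in> confC'" and y: "y \<in> confC'" and "x \<noteq> y"
  have confC: "pairwise (\<lambda>x y. inner x y \<le> 2) confC"
    by (rule pairwise_inner_confC)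
  consider "x \<in> confC - confD" "y \<in> confC - confD"
    | b where "x \<in> confC - confD" "b \<in> confD" "y = sigma9 b"
    | a where "a \<in> confD" "x = sigma9 a" "y \<in> confC - confD"
    | a b where "a \<in> confD" "x = sigma9 a" "b \<in> confD" "y = sigma9 b"
    using x y unfolding confC'_eq by blast
  then show "inner x y \<le> 2"
  proof cases
    case 1
    then show ?thesis
      using confC \<open>x \<noteq> y\<close> by (auto simp: pairwise_def)
  next
    case (2 b)
    then show ?thesis
      using inner_confC_sigma9_confD_le by blast
  next
    case (3 a)
    then show ?thesis
      using inner_confC_sigma9_confD_le inner_commute by metis
  next
    case (4 a b)
    then have "a \<noteq> b"
      using \<open>x \<noteq> y\<close> by blast
    then show ?thesis
      using confC confD_subset 4 inner_sigma9 by (auto simp: pairwise_def)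
  qed
qed

lemma inner_confC'_self: "x \<in> confC' \<Longrightarrow> inner x x = 4"
  unfolding confC'_eq using inner_confC_self inner_sigma9 confD_subset by auto

lemma finite_confC': "finite confC'"
  unfolding confC'_eq using finite_confC confD_subset finite_subset by blast

lemma card_confC': "card confC' = 306"
proof -
  have fin_D: "finite confD"
    using finite_confC confD_subset finite_subset by blast
  have "card confC' = card (confC - confD) + card (sigma9 ` confD)"
    unfolding confC'_eq
    by (rule card_Un_disjoint) (use finite_confC fin_D in \<open>auto simp: confD_def\<close>)
  also have "card (sigma9 ` confD) = card confD"
    by (rule card_image[OF inj_on_subset[OF inj_sigma9]]) simp
  also have "card (confC - confD) = card confC - card confD"
    by (rule card_Diff_subset[OF fin_D confD_subset])
  finally show ?thesis
    using card_mono[OF finite_confC confD_subset] card_confC by simp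
qed

section \<open>Non-isometry\<close>

lemma uminus_axis_vectors: "x \<in> axis_vectors \<Longrightarrow> - x \<in> axis_vectors"
proof (elim axis_vectorE)
  fix j s assume "j \<in> {1..9}" "s \<in> {-2, 2}" "\<forall>i\<in>{1..9}. coord x i = (if i = j then s else 0)"
  then have "j \<in> {1..9}" "- s \<in> {-2, 2}" "\<forall>i\<in>{1..9}. coord (- x) i = (if i = j then - s else 0)"
    by auto
  then show "- x \<in> axis_vectors"
    unfolding axis_vectors_def by blast
qed

lemma uminus_sign_vectors: "x \<in> sign_vectors T \<Longrightarrow> - x \<in> sign_vectors T"
  unfolding sign_vectors_def by simp

lemma uminus_confC: "x \<in> confC \<Longrightarrow> - x \<in> confC"
  unfolding confC_eq using uminus_axis_vectors uminus_sign_vectors by blast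

lemma linear_image_uminus_closed:
  assumes "linear f" and "\<And>x. x \<in> X \<Longrightarrow> - x \<in> X" and "y \<in> f ` X"
  shows "- y \<in> f ` X"
proof -
  obtain x where "x \<in> X" "y = f x"
    using assms(3) by blast
  then show ?thesis
    using assms(1,2) linear_neg by (metis image_eqI)
qed

lemma coord_1_sigma9_confD: "y \<in> sigma9 ` confD \<Longrightarrow> coord y 1 = 1"
  unfolding confD_def by auto

lemma notin_confC'_if_coords_neg_one:
  assumes y: "\<And>i. i \<in> {1, 3, 5, 7} \<Longrightarrow> coord y i = -1"
  shows "y \<notin> confC'"
proof -
  have "y \<notin> sigma9 ` confD"
    using coord_1_sigma9_confD y[of 1] by force
  moreover have "y \<notin> axis_vectors"
  proof
    assume "y \<in> axis_vectors"
    then obtain s where "s \<in> {-2, 2}" "coord y 1 = s \<or> coord y 1 = 0"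
      by (elim axis_vectorE) (metis atLeastAtMost_iff le_numeral_extra(4) one_le_numeral)
    then show False
      using y[of 1] by auto
  qed
  moreover have "y \<notin> sign_vectors S" if "S \<in> fam" for S
  proof
    assume y_sign: "y \<in> sign_vectors S"
    have "i \<in> S" if "i \<in> {1, 3, 5, 7}" for i
      using sign_vector_coord[OF y_sign, of i] y[OF that] that by (auto split: if_splits)
    then show False
      using fam_not_supset \<open>S \<in> fam\<close> by blast
  qed
  ultimately show ?thesis
    unfolding confC'_eq confC_eq by blast
qed

lemma confC'_not_uminus_closed: "\<exists>y\<in>confC'. - y \<notin> confC'"
proof
  define x where "x = vec9 (\<lambda>i. if i \<in> {1, 2, 4, 5} then 1 else 0)"
  have "{1, 2, 4, 5} \<in> fam"
    by (simp add: fam_def)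
  moreover have "x \<in> sign_vectors {1, 2, 4, 5}"
    unfolding sign_vectors_def x_def by (simp add: coord_vec9)
  ultimately have "x \<in> confC"
    unfolding confC_eq by blast
  moreover have "coord x 1 = 1"
    unfolding x_def by (subst coord_vec9) auto
  ultimately have "x \<in> confD"
    unfolding confD_def by blast
  then show "sigma9 x \<in> confC'"
    unfolding confC'_eq by blast
  have "coord (- sigma9 x) i = -1" if "i \<in> {1, 3, 5, 7}" for i
  proof -
    have i: "i \<in> {1..9}" "swap_index i \<in> {1, 2, 4, 5}"
      using that by (auto simp: swap_index_def)
    have "coord x (swap_index i) = 1"
      unfolding x_def using swap_index_in_range[OF i(1)] i(2) by (subst coord_vec9) auto
    then show ?thesis
      using coord_sigma9[OF i(1)] by simp
  qed
  then show "- sigma9 x \<notin> confC'"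
    by (rule notin_confC'_if_coords_neg_one)
qed

lemma not_isometric_confC_confC': "\<not> isometric_configs confC confC'"
proof
  assume "isometric_configs confC confC'"
  then obtain f where orth: "orthogonal_transformation f" and f: "f ` confC = confC'"
    unfolding isometric_configs_def by blast
  from orth have "linear f"
    by (rule orthogonal_transformation_linear)
  then have "- y \<in> confC'" if "y \<in> confC'" for y
    using linear_image_uminus_closed[OF _ uminus_confC] that f by blast
  then show False
    using confC'_not_uminus_closed by blast
qed

theorem mainTheorem3:
  shows "kissing_configuration confC \<and> kissing_configuration confC' \<and>
         card confC = 306 \<and> card confC' = 306 \<and>
         \<not> isometric_configs confC confC'"
proof (intro conjI)
  show "kissing_configuration confC"
    by (rule kissing_configurationI[OF finite_confC inner_confC_self pairwise_inner_confC])
  show "kissing_configuration confC'"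
    by (rule kissing_configurationI[OF finite_confC' inner_confC'_self pairwise_inner_confC'])
qed (fact card_confC card_confC' not_isometric_confC_confC')+

end
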